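(* Let $\mathcal{T}$ be a locally compact, $\sigma$-compact Hausdorff space, $\mu$ a finite positive Radon measure on $\mathcal{T}$ with $\mu(\mathcal{T})>0$, $1\le p<\infty$ and $q$ the conjugate exponent. For $\varepsilon>1$ let $S_{\varepsilon}^{p}=\{f\in L^{q}_{\mu}(\mathcal{T})\text{ real-valued}:\|f\|_q\le\varepsilon,\ \int f\,d\mu=\mu(\mathcal{T})^{1/p}\}$ and $L^{p}(\mathcal{T})_{\varepsilon}^{+}=\{g\in L^{p}_{\mu}(\mathcal{T})\text{ real-valued}:\int gf\,d\mu\ge0\ \forall f\in S_{\varepsilon}^{p}\}$. Let $L^{p}(\mathcal{T})_{+}$ be the cone of $\mu$-a.e. nonnegative functions in $L^p_\mu(\mathcal{T})$. Then there exists $\varepsilon>1$ such that the cones $L^{p}(\mathcal{T})_{+}$ and $L^{p}(\mathcal{T})_{\varepsilon}^{+}$ are comparable (one contains the other) if and only if $\operatorname{supp}(\mu)$ is finite.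
   Context: $L^p_\mu(\mathcal{T})$ is a unital $\ast$-normed space (involution = complex conjugation) with unit $e_p=\mu(\mathcal{T})^{-1/p}1$, dual $L^q_\mu(\mathcal{T})$ via $\langle g,f\rangle=\int gf\,d\mu$; the set $S_\varepsilon^p$ is the set of unital hermitian functionals of norm at most $\varepsilon$, and $L^{p}(\mathcal{T})_{\varepsilon}^{+}$ is the associated projective cone. *)

theory Defs
  imports "HOL-Probability.Probability"
begin

definition sigma_compact_type :: "'a::topological_space itself \<Rightarrow> bool" where
  "sigma_compact_type _ \<longleftrightarrow>
     (\<exists>K :: nat \<Rightarrow> 'a set. (\<forall>n. compact (K n)) \<and> (\<Union>n. K n) = UNIV)"

definition radon_measure :: "'a::topological_space measure \<Rightarrow> bool" where
  "radon_measure M \<longleftrightarrow>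
     sets M = sets borel \<and>
     (\<forall>K. compact K \<longrightarrow> emeasure M K < \<infinity>) \<and>
     (\<forall>B\<in>sets M. emeasure M B = (INF U\<in>{U. open U \<and> B \<subseteq> U}. emeasure M U)) \<and>
     (\<forall>U. open U \<longrightarrow> emeasure M U = (SUP K\<in>{K. compact K \<and> K \<subseteq> U}. emeasure M K))"

definition measure_support :: "'a::topological_space measure \<Rightarrow> 'a set" where
  "measure_support M = {x. \<forall>U. open U \<longrightarrow> x \<in> U \<longrightarrow> emeasure M U > 0}"

definition Lr_fun :: "'a measure \<Rightarrow> real \<Rightarrow> ('a \<Rightarrow> real) \<Rightarrow> bool" where
  "Lr_fun M r f \<longleftrightarrow> f \<in> borel_measurable M \<and> integrable M (\<lambda>x. \<bar>f x\<bar> powr r)"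

definition Lr_norm :: "'a measure \<Rightarrow> real \<Rightarrow> ('a \<Rightarrow> real) \<Rightarrow> real" where
  "Lr_norm M r f = (\<integral>x. \<bar>f x\<bar> powr r \<partial>M) powr (1 / r)"

definition Linf_fun :: "'a measure \<Rightarrow> ('a \<Rightarrow> real) \<Rightarrow> bool" where
  "Linf_fun M f \<longleftrightarrow> f \<in> borel_measurable M \<and> esssup M (\<lambda>x. ereal \<bar>f x\<bar>) < \<infinity>"

definition Linf_norm :: "'a measure \<Rightarrow> ('a \<Rightarrow> real) \<Rightarrow> real" where
  "Linf_norm M f = real_of_ereal (esssup M (\<lambda>x. ereal \<bar>f x\<bar>))"

definition dual_ball :: "'a measure \<Rightarrow> real \<Rightarrow> real \<Rightarrow> ('a \<Rightarrow> real) \<Rightarrow> bool" where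
  "dual_ball M p \<epsilon> f \<longleftrightarrow>
     (if p = 1 then Linf_fun M f \<and> Linf_norm M f \<le> \<epsilon>
      else Lr_fun M (p / (p - 1)) f \<and> Lr_norm M (p / (p - 1)) f \<le> \<epsilon>)"

definition S_eps :: "'a measure \<Rightarrow> real \<Rightarrow> real \<Rightarrow> ('a \<Rightarrow> real) set" where
  "S_eps M p \<epsilon> = {f. dual_ball M p \<epsilon> f \<and>
       (\<integral>x. f x \<partial>M) = measure M (space M) powr (1 / p)}"

definition Lp_cone_eps :: "'a measure \<Rightarrow> real \<Rightarrow> real \<Rightarrow> ('a \<Rightarrow> real) set" where
  "Lp_cone_eps M p \<epsilon> = {g. Lr_fun M p g \<and> (\<forall>f\<in>S_eps M p \<epsilon>. (\<integral>x. g x * f x \<partial>M) \<ge> 0)}"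

definition Lp_pos :: "'a measure \<Rightarrow> real \<Rightarrow> ('a \<Rightarrow> real) set" where
  "Lp_pos M p = {g. Lr_fun M p g \<and> (AE x in M. g x \<ge> 0)}"

end

theory Submission
  imports Defs
begin

text \<open>If the support of \<open>\<mu>\<close> is finite, every set of positive measure contains an atom
  and so has measure at least some \<open>\<delta> > 0\<close>. A functional \<open>f \<in> S\<^sub>\<epsilon>\<close> negative on a set
  \<open>B\<close> of positive measure would then satisfy, by Hoelder's inequality on the complement of \<open>B\<close>,
  \<open>\<mu>(T)\<^sup>1\<^sup>/\<^sup>p = \<integral>f \<le> \<epsilon> (\<mu>(T) - \<delta>)\<^sup>1\<^sup>/\<^sup>p\<close>, which fails for \<open>\<epsilon>\<close> close to \<open>1\<close>. So all of
  \<open>S\<^sub>\<epsilon>\<close> is a.e. nonnegative and \<open>L\<^sup>p(T)\<^sub>+ \<subseteq> L\<^sup>p(T)\<^sup>+\<^sub>\<epsilon>\<close>.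

  If the support is infinite, the Radon property yields sets \<open>A\<close> of arbitrarily small
  positive measure, and both inclusions fail: \<open>c (1 - 2 \<one>\<^sub>A)\<close> lies in \<open>S\<^sub>\<epsilon>\<close> but pairs
  negatively with \<open>\<one>\<^sub>A\<close>, while \<open>1 - 2 \<one>\<^sub>A\<close> pairs nonnegatively with all of \<open>S\<^sub>\<epsilon>\<close> but is not
  nonnegative.\<close>

section \<open>Hoelder's inequality against indicators\<close>

lemma Linf_fun_AE_abs_le:
  assumes "Linf_fun M f"
  shows "AE x in M. \<bar>f x\<bar> \<le> Linf_norm M f"
proof -
  have bound: "esssup M (\<lambda>x. ereal \<bar>f x\<bar>) \<le> ereal (Linf_norm M f)"
    using assms by (cases "esssup M (\<lambda>x. ereal \<bar>f x\<bar>)") (auto simp: Linf_fun_def Linf_norm_def)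
  from esssup_AE[of "\<lambda>x. ereal \<bar>f x\<bar>" M] show ?thesis
  proof eventually_elim
    case (elim x)
    then have "ereal \<bar>f x\<bar> \<le> ereal (Linf_norm M f)"
      using bound by (rule order.trans)
    then show ?case
      by simp
  qed
qed

lemma Linf_fun_integrable:
  assumes "finite_measure M" "Linf_fun M f"
  shows "integrable M f"
proof (rule finite_measure.integrable_const_bound[OF assms(1)])
  show "AE x in M. norm (f x) \<le> Linf_norm M f"
    using Linf_fun_AE_abs_le[OF assms(2)] by simp
  show "f \<in> borel_measurable M"
    using assms(2) by (simp add: Linf_fun_def)
qed

lemma Lr_fun_integrable:
  assumes M: "finite_measure M" and r: "1 \<le> r" and f: "Lr_fun M r f"
  shows "integrable M f"
proof (rule Bochner_Integration.integrable_bound)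
  show "integrable M (\<lambda>x. 1 + \<bar>f x\<bar> powr r)"
    using f M by (auto simp: Lr_fun_def finite_measure.integrable_const)
  show "f \<in> borel_measurable M"
    using f by (simp add: Lr_fun_def)
  have "\<bar>f x\<bar> \<le> 1 + \<bar>f x\<bar> powr r" for x
  proof (cases "\<bar>f x\<bar> \<le> 1")
    case False
    then have "\<bar>f x\<bar> powr 1 \<le> \<bar>f x\<bar> powr r"
      using r by (intro powr_mono) auto
    then show ?thesis
      using False by simp
  qed (simp add: add_increasing2)
  then show "AE x in M. norm (f x) \<le> norm (1 + \<bar>f x\<bar> powr r)"
    by simp
qed

lemma integral_abs_indicator_le_AE_bound:
  assumes M: "finite_measure M" and f: "integrable M f"
    and bound: "AE x in M. \<bar>f x\<bar> \<le> C" and A: "A \<in> sets M"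
  shows "(\<integral>x. \<bar>f x\<bar> * indicator A x \<partial>M) \<le> C * measure M A"
proof -
  have "(\<integral>x. \<bar>f x\<bar> * indicator A x \<partial>M) \<le> (\<integral>x. C * indicator A x \<partial>M)"
  proof (rule integral_mono_AE)
    show "integrable M (\<lambda>x. \<bar>f x\<bar> * indicator A x)"
      using f A by (intro integrable_real_mult_indicator) auto
    show "integrable M (\<lambda>x. C * indicator A x)"
      using A finite_measure.emeasure_finite[OF M, of A] by (simp add: less_top)
    show "AE x in M. \<bar>f x\<bar> * indicator A x \<le> C * indicator A x"
      using bound by eventually_elim (auto split: split_indicator)
  qed
  then show ?thesis
    using A by simp
qed

lemma integral_abs_powr_le_if_Lr_norm_le:
  assumes r: "0 < r" and f: "Lr_norm M r f \<le> \<epsilon>"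
  shows "(\<integral>x. \<bar>f x\<bar> powr r \<partial>M) \<le> \<epsilon> powr r"
proof -
  define I where "I = (\<integral>x. \<bar>f x\<bar> powr r \<partial>M)"
  have "I \<ge> 0"
    unfolding I_def by (rule integral_nonneg_AE) auto
  then have "I = (I powr (1 / r)) powr r"
    using r by (simp add: powr_powr)
  also have "\<dots> \<le> \<epsilon> powr r"
    using f r \<open>I \<ge> 0\<close> by (intro powr_mono2) (auto simp: I_def Lr_norm_def)
  finally show ?thesis
    by (simp add: I_def)
qed

text \<open>Young's inequality \<open>s t \<le> s\<^sup>q / q + t\<^sup>p / p\<close> at \<open>s = \<bar>f x\<bar> / \<epsilon>\<close>, integrated over \<open>A\<close>.\<close>
lemma integral_abs_indicator_Young:
  fixes p :: real
  defines "q \<equiv> p / (p - 1)"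
  assumes M: "finite_measure M" and p: "1 < p" and f: "Lr_fun M q f"
    and \<epsilon>: "0 < \<epsilon>" and t: "0 < t" and A: "A \<in> sets M"
  shows "t / \<epsilon> * (\<integral>x. \<bar>f x\<bar> * indicator A x \<partial>M)
    \<le> (\<integral>x. \<bar>f x\<bar> powr q \<partial>M) / \<epsilon> powr q / q + t powr p / p * measure M A"
proof -
  have q: "1 < q" and pq: "1 / p + 1 / q = 1"
    using p by (auto simp: q_def field_simps)
  have intf: "integrable M f"
    using Lr_fun_integrable[OF M _ f] q by simp
  have iq: "integrable M (\<lambda>x. \<bar>f x\<bar> powr q)"
    using f by (simp add: Lr_fun_def)
  have iA: "integrable M (\<lambda>x. indicator A x :: real)"
    using A finite_measure.emeasure_finite[OF M, of A] by (simp add: less_top)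
  have "t / \<epsilon> * (\<integral>x. \<bar>f x\<bar> * indicator A x \<partial>M) = (\<integral>x. \<bar>f x\<bar> / \<epsilon> * t * indicator A x \<partial>M)"
    by (simp add: field_simps)
  also have "\<dots> \<le> (\<integral>x. \<bar>f x\<bar> powr q / \<epsilon> powr q / q + t powr p / p * indicator A x \<partial>M)"
  proof (rule integral_mono)
    show "integrable M (\<lambda>x. \<bar>f x\<bar> / \<epsilon> * t * indicator A x)"
      using integrable_real_mult_indicator[OF A integrable_abs[OF intf]] by (simp add: field_simps)
    show "integrable M (\<lambda>x. \<bar>f x\<bar> powr q / \<epsilon> powr q / q + t powr p / p * indicator A x)"
      using iq iA by auto
    fix x
    have "\<bar>f x\<bar> / \<epsilon> * t \<le> (\<bar>f x\<bar> / \<epsilon>) powr q / q + t powr p / p"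
      using Youngs_inequality[of q p "\<bar>f x\<bar> / \<epsilon>" t] q p pq \<epsilon> t by (simp add: add.commute)
    moreover have "(\<bar>f x\<bar> / \<epsilon>) powr q = \<bar>f x\<bar> powr q / \<epsilon> powr q"
      using \<epsilon> by (simp add: powr_divide)
    moreover have "0 \<le> \<bar>f x\<bar> powr q / \<epsilon> powr q / q"
      using q by simp
    ultimately show "\<bar>f x\<bar> / \<epsilon> * t * indicator A x
        \<le> \<bar>f x\<bar> powr q / \<epsilon> powr q / q + t powr p / p * indicator A x"
      by (auto split: split_indicator)
  qed
  also have "\<dots> = (\<integral>x. \<bar>f x\<bar> powr q \<partial>M) / \<epsilon> powr q / q + t powr p / p * measure M A"
    using iq iA A by simp
  finally show ?thesis .
qed

text \<open>Hoelder's inequality against an indicator: take \<open>t = \<mu>(A)\<^sup>-\<^sup>1\<^sup>/\<^sup>p\<close> above.\<close>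
lemma integral_abs_indicator_le_Lr_norm:
  fixes p :: real
  defines "q \<equiv> p / (p - 1)"
  assumes M: "finite_measure M" and p: "1 < p" and f: "Lr_fun M q f"
    and \<epsilon>: "0 < \<epsilon>" "Lr_norm M q f \<le> \<epsilon>" and A: "A \<in> sets M"
  shows "(\<integral>x. \<bar>f x\<bar> * indicator A x \<partial>M) \<le> \<epsilon> * measure M A powr (1 / p)"
proof -
  have q: "1 < q" and pq: "1 / p + 1 / q = 1"
    using p by (auto simp: q_def field_simps)
  define J where "J = (\<integral>x. \<bar>f x\<bar> * indicator A x \<partial>M)"
  define a where "a = measure M A"
  show ?thesis
  proof (cases "a = 0")
    case True
    then have "AE x in M. x \<notin> A"
      using A M by (intro AE_I'[of A]) (auto simp: a_def finite_measure.emeasure_eq_measure)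
    then have "J = 0"
      unfolding J_def by (intro integral_eq_zero_AE) (auto split: split_indicator)
    then show ?thesis
      using True by (simp add: J_def a_def)
  next
    case False
    then have a: "0 < a"
      unfolding a_def using measure_nonneg[of M A] by linarith
    define t where "t = a powr (- 1 / p)"
    have t: "0 < t" "t powr p * a = 1"
      using a p by (auto simp: t_def powr_powr powr_minus_divide powr_divide)
    have "(\<integral>x. \<bar>f x\<bar> powr q \<partial>M) / \<epsilon> powr q \<le> 1"
      using integral_abs_powr_le_if_Lr_norm_le[OF _ \<epsilon>(2)] q \<epsilon>(1) by simp
    then have "(\<integral>x. \<bar>f x\<bar> powr q \<partial>M) / \<epsilon> powr q / q \<le> 1 / q"
      using q by (intro divide_right_mono) auto
    then have "t / \<epsilon> * J \<le> 1 / q + 1 / p"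
      using integral_abs_indicator_Young[OF M p f[unfolded q_def] \<epsilon>(1) t(1) A] t(2)
      by (simp add: J_def a_def q_def)
    then have "J \<le> \<epsilon> / t"
      using t \<epsilon> pq by (simp add: field_simps)
    also have "\<epsilon> / t = \<epsilon> * a powr (1 / p)"
      using a by (simp add: t_def powr_minus_divide field_simps)
    finally show ?thesis
      by (simp add: J_def a_def)
  qed
qed

lemma dual_ball_integrable:
  assumes "finite_measure M" "1 \<le> p" "dual_ball M p \<epsilon> f"
  shows "integrable M f"
  using assms Linf_fun_integrable[of M f] Lr_fun_integrable[of M "p / (p - 1)" f]
  by (auto simp: dual_ball_def split: if_splits)

lemma dual_ball_integral_abs_indicator_le:
  assumes M: "finite_measure M" and p: "1 \<le> p" and \<epsilon>: "0 < \<epsilon>"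
    and f: "dual_ball M p \<epsilon> f" and A: "A \<in> sets M"
  shows "(\<integral>x. \<bar>f x\<bar> * indicator A x \<partial>M) \<le> \<epsilon> * measure M A powr (1 / p)"
proof (cases "p = 1")
  case True
  then have "Linf_fun M f" "Linf_norm M f \<le> \<epsilon>"
    using f by (auto simp: dual_ball_def)
  then have "AE x in M. \<bar>f x\<bar> \<le> \<epsilon>"
    using Linf_fun_AE_abs_le by (fastforce elim: eventually_mono)
  then show ?thesis
    using integral_abs_indicator_le_AE_bound[OF M dual_ball_integrable[OF M p f] _ A] True
    by simp
next
  case False
  then show ?thesis
    using integral_abs_indicator_le_Lr_norm[OF M _ _ \<epsilon>(1) _ A] f p
    by (auto simp: dual_ball_def)
qed

section \<open>The support of a Radon measure\<close>

lemma sets_radon_measure: "radon_measure M \<Longrightarrow> sets M = sets borel"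
  by (simp add: radon_measure_def)

lemma radon_measure_outer_regular:
  "radon_measure M \<Longrightarrow> B \<in> sets M \<Longrightarrow> emeasure M B = (INF U\<in>{U. open U \<and> B \<subseteq> U}. emeasure M U)"
  unfolding radon_measure_def by blast

lemma radon_measure_inner_regular_open:
  "radon_measure M \<Longrightarrow> open U \<Longrightarrow> emeasure M U = (SUP K\<in>{K. compact K \<and> K \<subseteq> U}. emeasure M K)"
  unfolding radon_measure_def by blast

lemma Compl_measure_support: "- measure_support M = \<Union>{U. open U \<and> emeasure M U = 0}"
  by (auto simp: measure_support_def not_less)

lemma closed_measure_support: "closed (measure_support M)"
  unfolding closed_def Compl_measure_support by (rule open_Union) blast

lemma measure_support_in_sets: "radon_measure M \<Longrightarrow> measure_support M \<in> sets M"
  using borel_closed[OF closed_measure_support] by (simp add: sets_radon_measure)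

lemma emeasure_Compl_measure_support:
  assumes R: "radon_measure M"
  shows "emeasure M (- measure_support M) = 0"
proof -
  let ?V = "{U. open U \<and> emeasure M U = 0}"
  have "emeasure M (- measure_support M)
      = (SUP K\<in>{K. compact K \<and> K \<subseteq> - measure_support M}. emeasure M K)"
    using closed_measure_support by (intro radon_measure_inner_regular_open[OF R]) auto
  also have "\<dots> \<le> 0"
  proof (rule SUP_least)
    fix K assume "K \<in> {K. compact K \<and> K \<subseteq> - measure_support M}"
    then have "compact K" "K \<subseteq> \<Union>?V"
      by (auto simp: Compl_measure_support)
    then obtain C where C: "C \<subseteq> ?V" "finite C" "K \<subseteq> \<Union>C"
      by (rule compactE) auto
    have null: "(\<Union>U\<in>C. U) \<in> null_sets M"
      using C(1,2) sets_radon_measure[OF R]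
      by (intro null_sets_UN' countable_finite) (auto simp: null_sets_def)
    have "emeasure M K \<le> emeasure M (\<Union>U\<in>C. U)"
      using C(3) null by (intro emeasure_mono) auto
    then show "emeasure M K \<le> 0"
      using null by (simp add: null_setsD1)
  qed
  finally show ?thesis
    by simp
qed

lemma emeasure_singleton_pos_if_finite_support:
  fixes M :: "'a::t1_space measure"
  assumes R: "radon_measure M" and fin: "finite (measure_support M)"
    and x: "x \<in> measure_support M"
  shows "0 < emeasure M {x}"
proof -
  have "closed (measure_support M - {x})"
    using fin by (intro finite_imp_closed) auto
  then have "0 < emeasure M (- (measure_support M - {x}))"
    using x unfolding measure_support_def by blast
  also have "\<dots> \<le> emeasure M ({x} \<union> - measure_support M)"
    using measure_support_in_sets[OF R] sets_radon_measure[OF R] by (intro emeasure_mono) auto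
  also have "\<dots> \<le> emeasure M {x} + emeasure M (- measure_support M)"
    using measure_support_in_sets[OF R] sets_radon_measure[OF R] by (intro emeasure_subadditive) auto
  also have "\<dots> = emeasure M {x}"
    using emeasure_Compl_measure_support[OF R] by simp
  finally show ?thesis .
qed

lemma finite_support_imp_measure_bounded_below:
  fixes M :: "'a::t1_space measure"
  assumes R: "radon_measure M" and F: "finite_measure M" and fin: "finite (measure_support M)"
  obtains \<delta> where "0 < \<delta>" "\<And>B. B \<in> sets M \<Longrightarrow> 0 < measure M B \<Longrightarrow> \<delta> \<le> measure M B"
proof
  \<comment> \<open>the \<open>1\<close> only guards against an empty support, where \<open>Min\<close> is unspecified\<close>
  define \<delta> where "\<delta> = Min (insert 1 ((\<lambda>x. measure M {x}) ` measure_support M))"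
  have "0 < measure M {x}" if "x \<in> measure_support M" for x
    using emeasure_singleton_pos_if_finite_support[OF R fin that]
    by (simp add: finite_measure.emeasure_eq_measure[OF F])
  then show "0 < \<delta>"
    using fin by (simp add: \<delta>_def)
  fix B assume B: "B \<in> sets M" "0 < measure M B"
  have "B \<inter> measure_support M \<noteq> {}"
  proof
    assume "B \<inter> measure_support M = {}"
    then have "emeasure M B \<le> emeasure M (- measure_support M)"
      using measure_support_in_sets[OF R] sets_radon_measure[OF R] by (intro emeasure_mono) auto
    then show False
      using B(2) emeasure_Compl_measure_support[OF R]
      by (simp add: finite_measure.emeasure_eq_measure[OF F])
  qed
  then obtain x where x: "x \<in> B" "x \<in> measure_support M"
    by blast
  then have "\<delta> \<le> measure M {x}"
    using fin by (simp add: \<delta>_def)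
  also have "\<dots> \<le> measure M B"
    using x B sets_radon_measure[OF R] by (intro finite_measure.finite_measure_mono[OF F]) auto
  finally show "\<delta> \<le> measure M B" .
qed

lemma finite_measure_exists_small_singleton:
  assumes M: "finite_measure M" and S: "infinite S"
    and sets: "\<And>x. x \<in> S \<Longrightarrow> {x} \<in> sets M" and \<eta>: "0 < \<eta>"
  shows "\<exists>x\<in>S. measure M {x} < \<eta>"
proof (rule ccontr)
  assume "\<not> (\<exists>x\<in>S. measure M {x} < \<eta>)"
  then have large: "\<eta> \<le> measure M {x}" if "x \<in> S" for x
    using that by (simp add: not_less)
  obtain N :: nat where N: "measure M (space M) < real N * \<eta>"
    using reals_Archimedean3[OF \<eta>] by blast
  obtain G where G: "G \<subseteq> S" "finite G" "card G = N"
    using infinite_arbitrarily_large[OF S] by blast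
  have "real N * \<eta> = (\<Sum>x\<in>G. \<eta>)"
    using G(3) by simp
  also have "\<dots> \<le> (\<Sum>x\<in>G. measure M {x})"
    using G(1) large by (intro sum_mono) auto
  also have "\<dots> = measure M G"
    using G sets by (intro measure_eq_sum_singleton[symmetric])
      (auto simp: finite_measure.emeasure_finite[OF M])
  also have "\<dots> \<le> measure M (space M)"
    by (rule finite_measure.bounded_measure[OF M])
  finally show False
    using N by simp
qed

text \<open>Either some support point is a null atom, and outer regularity gives small open
  neighbourhoods of positive measure, or the infinitely many support points are atoms of
  finite total mass, so some of them are small.\<close>
lemma infinite_support_imp_small_sets:
  fixes M :: "'a::t1_space measure"
  assumes R: "radon_measure M" and F: "finite_measure M"
    and inf: "infinite (measure_support M)" and \<eta>: "0 < \<eta>"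
  obtains A where "A \<in> sets M" "0 < measure M A" "measure M A < \<eta>"
proof (cases "\<exists>x\<in>measure_support M. emeasure M {x} = 0")
  case True
  then obtain x where x: "x \<in> measure_support M" "emeasure M {x} = 0"
    by blast
  have "emeasure M {x} = (INF U\<in>{U. open U \<and> {x} \<subseteq> U}. emeasure M U)"
    using radon_measure_outer_regular[OF R] sets_radon_measure[OF R] by simp
  then have "(INF U\<in>{U. open U \<and> {x} \<subseteq> U}. emeasure M U) < ennreal \<eta>"
    using x(2) \<eta> by simp
  then obtain U where U: "open U" "x \<in> U" "emeasure M U < ennreal \<eta>"
    by (auto simp: INF_less_iff)
  have "0 < emeasure M U"
    using U x(1) by (auto simp: measure_support_def)
  then show ?thesis
    using U \<eta> sets_radon_measure[OF R]
    by (intro that[of U]) (auto simp: finite_measure.emeasure_eq_measure[OF F] ennreal_less_iff)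
next
  case False
  have "{x} \<in> sets M" for x
    using sets_radon_measure[OF R] by simp
  then obtain x where x: "x \<in> measure_support M" "measure M {x} < \<eta>"
    using finite_measure_exists_small_singleton[OF F inf _ \<eta>] by blast
  moreover have "0 < measure M {x}"
    using False x(1) by (auto simp: finite_measure.emeasure_eq_measure[OF F] zero_less_measure_iff)
  ultimately show ?thesis
    using that \<open>{x} \<in> sets M\<close> by blast
qed

section \<open>Finite support: the cones are nested\<close>

lemma Lp_pos_subset_Lp_cone_eps_if_S_eps_nonneg:
  assumes "\<And>f. f \<in> S_eps M p \<epsilon> \<Longrightarrow> AE x in M. 0 \<le> f x"
  shows "Lp_pos M p \<subseteq> Lp_cone_eps M p \<epsilon>"
proof
  fix g assume g: "g \<in> Lp_pos M p"
  have "0 \<le> (\<integral>x. g x * f x \<partial>M)" if "f \<in> S_eps M p \<epsilon>" for f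
  proof (rule integral_nonneg_AE)
    show "AE x in M. 0 \<le> g x * f x"
      using g assms[OF that] by (auto simp: Lp_pos_def elim: eventually_rev_mp)
  qed
  then show "g \<in> Lp_cone_eps M p \<epsilon>"
    using g by (simp add: Lp_pos_def Lp_cone_eps_def)
qed

lemma S_eps_measure_nonneg_set_ge:
  assumes M: "finite_measure M" and p: "1 \<le> p" and \<epsilon>: "0 < \<epsilon>" and f: "f \<in> S_eps M p \<epsilon>"
  shows "measure M (space M) powr (1 / p) \<le> \<epsilon> * measure M {x\<in>space M. 0 \<le> f x} powr (1 / p)"
proof -
  define C where "C = {x\<in>space M. 0 \<le> f x}"
  have db: "dual_ball M p \<epsilon> f"
    using f by (simp add: S_eps_def)
  have intf: "integrable M f"
    using dual_ball_integrable[OF M p db] .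
  have C: "C \<in> sets M"
    using intf by (simp add: C_def)
  have "measure M (space M) powr (1 / p) = (\<integral>x. f x \<partial>M)"
    using f by (simp add: S_eps_def)
  also have "\<dots> \<le> (\<integral>x. \<bar>f x\<bar> * indicator C x \<partial>M)"
    using intf integrable_real_mult_indicator[OF C integrable_abs[OF intf]]
    by (intro integral_mono) (auto simp: C_def split: split_indicator)
  also have "\<dots> \<le> \<epsilon> * measure M C powr (1 / p)"
    by (rule dual_ball_integral_abs_indicator_le[OF M p \<epsilon> db C])
  finally show ?thesis
    by (simp add: C_def)
qed

lemma S_eps_AE_nonneg:
  assumes M: "finite_measure M" and p: "1 \<le> p" and \<epsilon>: "0 < \<epsilon>"
    and \<delta>: "\<And>B. B \<in> sets M \<Longrightarrow> 0 < measure M B \<Longrightarrow> \<delta> \<le> measure M B"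
    and \<epsilon>_small: "\<epsilon> * (measure M (space M) - \<delta>) powr (1 / p) < measure M (space M) powr (1 / p)"
    and f: "f \<in> S_eps M p \<epsilon>"
  shows "AE x in M. 0 \<le> f x"
proof -
  define B where "B = {x\<in>space M. f x < 0}"
  have "integrable M f"
    using f dual_ball_integrable[OF M p] by (auto simp: S_eps_def)
  then have B: "B \<in> sets M"
    by (simp add: B_def)
  have "measure M B = 0"
  proof (rule ccontr)
    assume "measure M B \<noteq> 0"
    then have "\<delta> \<le> measure M B"
      using \<delta>[OF B] measure_nonneg[of M B] by linarith
    have "space M - B = {x\<in>space M. 0 \<le> f x}"
      by (auto simp: B_def)
    then have "measure M {x\<in>space M. 0 \<le> f x} = measure M (space M) - measure M B"
      using finite_measure.finite_measure_compl[OF M B] by simp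
    then have "\<epsilon> * measure M {x\<in>space M. 0 \<le> f x} powr (1 / p)
        \<le> \<epsilon> * (measure M (space M) - \<delta>) powr (1 / p)"
      using \<open>\<delta> \<le> measure M B\<close> \<epsilon> p finite_measure.bounded_measure[OF M, of B]
      by (intro mult_left_mono powr_mono2) auto
    then show False
      using S_eps_measure_nonneg_set_ge[OF M p \<epsilon> f] \<epsilon>_small by simp
  qed
  then have "B \<in> null_sets M"
    using B by (simp add: finite_measure.emeasure_eq_measure[OF M] null_sets_def)
  then show ?thesis
    using B by (auto simp: AE_iff_null_sets B_def not_le elim: eventually_mono)
qed

lemma Lp_pos_subset_Lp_cone_eps_if_measure_bounded_below:
  assumes M: "finite_measure M" and p: "1 \<le> p" and m: "0 < measure M (space M)"
    and \<delta>: "0 < \<delta>" "\<And>B. B \<in> sets M \<Longrightarrow> 0 < measure M B \<Longrightarrow> \<delta> \<le> measure M B"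
  shows "\<exists>\<epsilon>>1. Lp_pos M p \<subseteq> Lp_cone_eps M p \<epsilon>"
proof -
  define m where "m = measure M (space M)"
  have m0: "0 < m"
    using m by (simp add: m_def)
  have "\<delta> \<le> m"
    using \<delta>(2)[of "space M"] m by (simp add: m_def)
  then have m\<delta>: "0 < m - \<delta> / 2"
    using \<delta>(1) by simp
  define \<epsilon> where "\<epsilon> = (m / (m - \<delta> / 2)) powr (1 / p)"
  have \<epsilon>: "1 < \<epsilon>"
    unfolding \<epsilon>_def using m\<delta> \<delta>(1) p by (intro gr_one_powr) (auto simp: field_simps)
  have "\<epsilon> * (m - \<delta>) powr (1 / p) = (m / (m - \<delta> / 2) * (m - \<delta>)) powr (1 / p)"
    unfolding \<epsilon>_def using m0 m\<delta> \<open>\<delta> \<le> m\<close> by (intro powr_mult[symmetric])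
  also have "\<dots> < m powr (1 / p)"
  proof (rule powr_less_mono2)
    show "0 < 1 / p"
      using p by simp
    show "0 \<le> m / (m - \<delta> / 2) * (m - \<delta>)"
      using m0 m\<delta> \<open>\<delta> \<le> m\<close> by simp
    have "m * (m - \<delta>) < m * (m - \<delta> / 2)"
      using m0 \<delta>(1) by simp
    then show "m / (m - \<delta> / 2) * (m - \<delta>) < m"
      using m\<delta> by (simp add: field_simps)
  qed
  finally have \<epsilon>_small: "\<epsilon> * (measure M (space M) - \<delta>) powr (1 / p) < measure M (space M) powr (1 / p)"
    by (simp add: m_def)
  have "Lp_pos M p \<subseteq> Lp_cone_eps M p \<epsilon>"
    using S_eps_AE_nonneg[OF M p _ \<delta>(2) \<epsilon>_small] \<epsilon>
    by (intro Lp_pos_subset_Lp_cone_eps_if_S_eps_nonneg) simp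
  then show ?thesis
    using \<epsilon> by blast
qed

section \<open>Infinite support: the cones are incomparable\<close>

lemma dual_ball_abs_const:
  assumes M: "finite_measure M" and p: "1 \<le> p" and m: "0 < measure M (space M)"
    and f: "f \<in> borel_measurable M" "\<And>x. \<bar>f x\<bar> = c"
    and c: "c * measure M (space M) powr (1 - 1 / p) \<le> \<epsilon>"
  shows "dual_ball M p \<epsilon> f"
proof (cases "p = 1")
  case True
  have "emeasure M (space M) \<noteq> 0"
    using m by (simp add: finite_measure.emeasure_eq_measure[OF M])
  then have "esssup M (\<lambda>x. ereal \<bar>f x\<bar>) = ereal c"
    by (simp add: f(2) esssup_const)
  then show ?thesis
    using True f c m by (simp add: dual_ball_def Linf_fun_def Linf_norm_def)
next
  case False
  define q where "q = p / (p - 1)"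
  have "1 < p"
    using p False by simp
  have c0: "0 \<le> c"
    by (metis abs_ge_zero f(2))
  have "Lr_norm M q f = (measure M (space M) * c powr q) powr (1 / q)"
    by (simp add: Lr_norm_def f(2))
  also have "\<dots> = c * measure M (space M) powr (1 - 1 / p)"
    using m c0 \<open>1 < p\<close> by (simp add: powr_mult powr_powr q_def field_simps)
  finally have "Lr_norm M q f \<le> \<epsilon>"
    using c by simp
  moreover have "integrable M (\<lambda>x. \<bar>f x\<bar> powr q)"
    using M by (simp add: f(2) finite_measure.integrable_const)
  ultimately show ?thesis
    using False f(1) by (simp add: dual_ball_def Lr_fun_def q_def)
qed

lemma sign_indicator_scaled_in_S_eps:
  fixes M :: "'a measure" and A :: "'a set" and p :: real
  defines "m \<equiv> measure M (space M)" and "a \<equiv> measure M A"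
  assumes M: "finite_measure M" and p: "1 \<le> p" and A: "A \<in> sets M"
    and m2a: "0 < m - 2 * a" and \<epsilon>: "m \<le> \<epsilon> * (m - 2 * a)"
  shows "(\<lambda>x. m powr (1 / p) / (m - 2 * a) * (1 - 2 * indicator A x)) \<in> S_eps M p \<epsilon>"
proof -
  define c where "c = m powr (1 / p) / (m - 2 * a)"
  define f where "f x = c * (1 - 2 * indicator A x)" for x
  have "0 \<le> a"
    by (simp add: a_def)
  then have m: "0 < m"
    using m2a by linarith
  have c: "0 < c"
    unfolding c_def using m m2a by simp
  have "c * m powr (1 - 1 / p) = m / (m - 2 * a)"
    using m by (simp add: c_def powr_add[symmetric])
  also have "\<dots> \<le> \<epsilon>"
    using \<epsilon> m2a by (simp add: field_simps)
  finally have "dual_ball M p \<epsilon> f"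
  proof (intro dual_ball_abs_const[OF M p])
    show "f \<in> borel_measurable M"
      unfolding f_def using A by measurable
    show "\<bar>f x\<bar> = c" for x
      using c by (simp add: f_def split: split_indicator)
  qed (use m in \<open>simp_all add: m_def\<close>)
  moreover have "(\<integral>x. f x \<partial>M) = m powr (1 / p)"
  proof -
    have "integrable M (\<lambda>x. indicator A x :: real)"
      using A finite_measure.emeasure_finite[OF M, of A] by (simp add: less_top)
    then have "(\<integral>x. f x \<partial>M) = c * (m - 2 * a)"
      using A M by (simp add: f_def finite_measure.integrable_const a_def m_def algebra_simps)
    then show ?thesis
      using m2a by (simp add: c_def)
  qed
  ultimately have "f \<in> S_eps M p \<epsilon>"
    by (simp add: S_eps_def m_def)
  then show ?thesis
    unfolding f_def c_def .
qed

lemma Lp_pos_not_subset_Lp_cone_eps: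
  assumes M: "finite_measure M" and p: "1 \<le> p" and \<epsilon>: "1 < \<epsilon>"
    and A: "A \<in> sets M" "0 < measure M A"
    and A_small: "measure M A < measure M (space M) * (\<epsilon> - 1) / (2 * \<epsilon>)"
  shows "\<not> Lp_pos M p \<subseteq> Lp_cone_eps M p \<epsilon>"
proof
  assume incl: "Lp_pos M p \<subseteq> Lp_cone_eps M p \<epsilon>"
  define m where "m = measure M (space M)"
  define a where "a = measure M A"
  define c where "c = m powr (1 / p) / (m - 2 * a)"
  have a: "0 < a" "a < m * (\<epsilon> - 1) / (2 * \<epsilon>)"
    using A(2) A_small by (simp_all add: a_def m_def)
  then have key: "m < \<epsilon> * (m - 2 * a)"
    using \<epsilon> by (simp add: field_simps)
  moreover have "0 \<le> m"
    by (simp add: m_def)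
  ultimately have "0 < \<epsilon> * (m - 2 * a)"
    by linarith
  then have m2a: "0 < m - 2 * a"
    using \<epsilon> by (simp add: zero_less_mult_iff)
  then have f: "(\<lambda>x. c * (1 - 2 * indicator A x)) \<in> S_eps M p \<epsilon>"
    using key unfolding c_def m_def a_def by (intro sign_indicator_scaled_in_S_eps[OF M p A(1)]) auto
  have "(\<lambda>x. \<bar>indicator A x :: real\<bar> powr p) = indicator A"
    using p by (auto split: split_indicator)
  then have "indicator A \<in> Lp_pos M p"
    using A(1) finite_measure.emeasure_finite[OF M, of A] by (simp add: Lp_pos_def Lr_fun_def less_top)
  then have "0 \<le> (\<integral>x. indicator A x * (c * (1 - 2 * indicator A x)) \<partial>M)"
    using incl f by (auto simp: Lp_cone_eps_def)
  also have "\<dots> = (\<integral>x. - c * indicator A x \<partial>M)"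
    by (intro Bochner_Integration.integral_cong) (auto split: split_indicator)
  also have "\<dots> = - c * a"
    using A(1) by (simp add: a_def)
  moreover have c: "0 < c"
    unfolding c_def using m2a a(1) by simp
  ultimately show False
    using mult_pos_pos[OF c a(1)] by linarith
qed

lemma sign_indicator_in_Lp_cone_eps:
  assumes M: "finite_measure M" and p: "1 \<le> p" and \<epsilon>: "0 < \<epsilon>" and A: "A \<in> sets M"
    and A_small: "2 * \<epsilon> * measure M A powr (1 / p) \<le> measure M (space M) powr (1 / p)"
  shows "(\<lambda>x. 1 - 2 * indicator A x) \<in> Lp_cone_eps M p \<epsilon>"
  unfolding Lp_cone_eps_def
proof (intro CollectI conjI ballI)
  have "\<bar>1 - 2 * indicator A x :: real\<bar> powr p = 1" for x
    by (simp split: split_indicator)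
  moreover have "(\<lambda>x. 1 - 2 * indicator A x :: real) \<in> borel_measurable M"
    using A by measurable
  ultimately show "Lr_fun M p (\<lambda>x. 1 - 2 * indicator A x)"
    using M by (simp add: Lr_fun_def finite_measure.integrable_const)
  fix f assume "f \<in> S_eps M p \<epsilon>"
  then have f: "dual_ball M p \<epsilon> f" "(\<integral>x. f x \<partial>M) = measure M (space M) powr (1 / p)"
    by (auto simp: S_eps_def)
  have intf: "integrable M f"
    by (rule dual_ball_integrable[OF M p f(1)])
  have iA: "integrable M (\<lambda>x. f x * indicator A x)"
    using intf A by (intro integrable_real_mult_indicator) auto
  have "(\<integral>x. f x * indicator A x \<partial>M) \<le> (\<integral>x. \<bar>f x\<bar> * indicator A x \<partial>M)"
    using iA integrable_real_mult_indicator[OF A integrable_abs[OF intf]]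
    by (intro integral_mono) (auto split: split_indicator)
  also have "\<dots> \<le> \<epsilon> * measure M A powr (1 / p)"
    by (rule dual_ball_integral_abs_indicator_le[OF M p \<epsilon> f(1) A])
  finally have "(\<integral>x. f x * indicator A x \<partial>M) \<le> \<epsilon> * measure M A powr (1 / p)" .
  moreover have "(\<integral>x. (1 - 2 * indicator A x) * f x \<partial>M)
      = measure M (space M) powr (1 / p) - 2 * (\<integral>x. f x * indicator A x \<partial>M)"
  proof -
    have "(\<integral>x. (1 - 2 * indicator A x) * f x \<partial>M) = (\<integral>x. f x - 2 * (f x * indicator A x) \<partial>M)"
      by (intro Bochner_Integration.integral_cong) (auto simp: algebra_simps)
    then show ?thesis
      using intf iA f(2) by simp
  qed
  ultimately show "0 \<le> (\<integral>x. (1 - 2 * indicator A x) * f x \<partial>M)"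
    using A_small by simp
qed

lemma Lp_cone_eps_not_subset_Lp_pos:
  assumes M: "finite_measure M" and p: "1 \<le> p" and \<epsilon>: "0 < \<epsilon>"
    and A: "A \<in> sets M" "0 < measure M A"
    and A_small: "measure M A < measure M (space M) / (2 * \<epsilon>) powr p"
  shows "\<not> Lp_cone_eps M p \<epsilon> \<subseteq> Lp_pos M p"
proof
  assume "Lp_cone_eps M p \<epsilon> \<subseteq> Lp_pos M p"
  moreover have "2 * \<epsilon> * measure M A powr (1 / p) \<le> measure M (space M) powr (1 / p)"
  proof -
    have "measure M A powr (1 / p) \<le> (measure M (space M) / (2 * \<epsilon>) powr p) powr (1 / p)"
      using A(2) A_small p by (intro powr_mono2) auto
    also have "\<dots> = measure M (space M) powr (1 / p) / (2 * \<epsilon>)"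
      using \<epsilon> p by (simp add: powr_divide powr_powr)
    finally show ?thesis
      using \<epsilon> by (simp add: field_simps)
  qed
  ultimately have "AE x in M. 0 \<le> 1 - 2 * (indicator A x :: real)"
    using sign_indicator_in_Lp_cone_eps[OF M p \<epsilon> A(1)] by (auto simp: Lp_pos_def)
  then have "AE x in M. x \<notin> A"
    by eventually_elim (auto split: split_indicator_asm)
  then have "A \<in> null_sets M"
    using A(1) by (simp add: AE_iff_null_sets)
  then show False
    using A(2) by (simp add: measure_def null_setsD1)
qed

lemma infinite_support_imp_cones_incomparable:
  fixes M :: "'a::t1_space measure"
  assumes R: "radon_measure M" and M: "finite_measure M" and p: "1 \<le> p" and \<epsilon>: "1 < \<epsilon>"
    and m: "0 < measure M (space M)" and inf: "infinite (measure_support M)"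
  shows "\<not> Lp_pos M p \<subseteq> Lp_cone_eps M p \<epsilon> \<and> \<not> Lp_cone_eps M p \<epsilon> \<subseteq> Lp_pos M p"
proof
  obtain A where "A \<in> sets M" "0 < measure M A"
    "measure M A < measure M (space M) * (\<epsilon> - 1) / (2 * \<epsilon>)"
    using infinite_support_imp_small_sets[OF R M inf, of "measure M (space M) * (\<epsilon> - 1) / (2 * \<epsilon>)"]
      m \<epsilon> by auto
  then show "\<not> Lp_pos M p \<subseteq> Lp_cone_eps M p \<epsilon>"
    by (rule Lp_pos_not_subset_Lp_cone_eps[OF M p \<epsilon>])
next
  obtain B where "B \<in> sets M" "0 < measure M B"
    "measure M B < measure M (space M) / (2 * \<epsilon>) powr p"
    using infinite_support_imp_small_sets[OF R M inf, of "measure M (space M) / (2 * \<epsilon>) powr p"]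
      m \<epsilon> by auto
  then show "\<not> Lp_cone_eps M p \<epsilon> \<subseteq> Lp_pos M p"
    using Lp_cone_eps_not_subset_Lp_pos[OF M p] \<epsilon> by simp
qed

theorem theorem5p6:
  fixes M :: "'a::t2_space measure" and p :: real
  assumes "locally_compact_space (euclidean :: 'a topology)"
    and "sigma_compact_type TYPE('a)"
    and "finite_measure M"
    and "radon_measure M"
    and "emeasure M (space M) > 0"
    and "1 \<le> p"
  shows "(\<exists>\<epsilon>>1. Lp_pos M p \<subseteq> Lp_cone_eps M p \<epsilon> \<or> Lp_cone_eps M p \<epsilon> \<subseteq> Lp_pos M p)
         \<longleftrightarrow> finite (measure_support M)"
proof -
  note M = assms(3) and R = assms(4) and p = assms(6)
  have m: "0 < measure M (space M)"
    using assms(5) by (simp add: finite_measure.emeasure_eq_measure[OF M])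
  show ?thesis
  proof
    assume "\<exists>\<epsilon>>1. Lp_pos M p \<subseteq> Lp_cone_eps M p \<epsilon> \<or> Lp_cone_eps M p \<epsilon> \<subseteq> Lp_pos M p"
    then show "finite (measure_support M)"
      using infinite_support_imp_cones_incomparable[OF R M p _ m] by blast
  next
    assume fin: "finite (measure_support M)"
    obtain \<delta> where "0 < \<delta>" "\<And>B. B \<in> sets M \<Longrightarrow> 0 < measure M B \<Longrightarrow> \<delta> \<le> measure M B"
      using finite_support_imp_measure_bounded_below[OF R M fin] by blast
    then show "\<exists>\<epsilon>>1. Lp_pos M p \<subseteq> Lp_cone_eps M p \<epsilon> \<or> Lp_cone_eps M p \<epsilon> \<subseteq> Lp_pos M p"
      using Lp_pos_subset_Lp_cone_eps_if_measure_bounded_below[OF M p m] by blast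
  qed
qed

end
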